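(* Let $A$ be an integral domain with quotient field $K$, let $E$ be a $K$-vector space (regarded as an $A$-module), and let $R=A\propto E$ be the trivial ring extension of $A$ by $E$. Then $R$ is an elementary divisor ring if and only if (1) $A$ is an elementary divisor ring and (2) $\dim_K(E)=1$.
   Context: All rings are commutative with identity. For a ring $A$ and an $A$-module $E$, the trivial ring extension $A\propto E$ is the set of pairs $(a,e)$ with $a\in A$, $e\in E$, with componentwise addition and multiplication $(a,e)(b,f)=(ab,af+be)$. A matrix $M$ (not necessarily square) over a ring $S$ admits diagonal reduction if there are invertible $P,Q$ over $S$ with $PMQ$ diagonal $(d_{ij})$ and $d_{ii}\mid d_{(i+1)(i+1)}$ for each $i$; $S$ is an elementary divisor ring if every matrix over $S$ admits diagonal reduction. *)

theory Defs
  imports "HOL.Vector_Spaces" "HOL-Algebra.Ring" "HOL-Algebra.Divisibility" "HOL-Computational_Algebra.Fraction_Field"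
begin

text \<open>Matrices over a ring record R: functions nat => nat => 'r, only the entries
  with row index < m and column index < n are relevant.\<close>

definition is_mat :: "('r, 'm) ring_scheme \<Rightarrow> nat \<Rightarrow> nat \<Rightarrow> (nat \<Rightarrow> nat \<Rightarrow> 'r) \<Rightarrow> bool" where
  "is_mat R m n M \<longleftrightarrow> (\<forall>i<m. \<forall>j<n. M i j \<in> carrier R)"

definition mat_mult :: "('r, 'm) ring_scheme \<Rightarrow> (nat \<Rightarrow> nat \<Rightarrow> 'r) \<Rightarrow> (nat \<Rightarrow> nat \<Rightarrow> 'r) \<Rightarrow> nat
    \<Rightarrow> (nat \<Rightarrow> nat \<Rightarrow> 'r)" where
  "mat_mult R M N n = (\<lambda>i k. \<Oplus>\<^bsub>R\<^esub> j\<in>{..<n}. M i j \<otimes>\<^bsub>R\<^esub> N j k)"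

definition mat_eq :: "nat \<Rightarrow> nat \<Rightarrow> (nat \<Rightarrow> nat \<Rightarrow> 'r) \<Rightarrow> (nat \<Rightarrow> nat \<Rightarrow> 'r) \<Rightarrow> bool" where
  "mat_eq m n M N \<longleftrightarrow> (\<forall>i<m. \<forall>j<n. M i j = N i j)"

definition id_mat :: "('r, 'm) ring_scheme \<Rightarrow> nat \<Rightarrow> nat \<Rightarrow> 'r" where
  "id_mat R = (\<lambda>i j. if i = j then \<one>\<^bsub>R\<^esub> else \<zero>\<^bsub>R\<^esub>)"

definition invertible_mat :: "('r, 'm) ring_scheme \<Rightarrow> nat \<Rightarrow> (nat \<Rightarrow> nat \<Rightarrow> 'r) \<Rightarrow> bool" where
  "invertible_mat R n P \<longleftrightarrow> is_mat R n n P \<and>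
     (\<exists>Q. is_mat R n n Q \<and> mat_eq n n (mat_mult R P Q n) (id_mat R)
                         \<and> mat_eq n n (mat_mult R Q P n) (id_mat R))"

definition admits_diagonal_reduction ::
    "('r, 'm) ring_scheme \<Rightarrow> nat \<Rightarrow> nat \<Rightarrow> (nat \<Rightarrow> nat \<Rightarrow> 'r) \<Rightarrow> bool" where
  "admits_diagonal_reduction R m n M \<longleftrightarrow>
     (\<exists>P Q. invertible_mat R m P \<and> invertible_mat R n Q \<and>
        (let D = mat_mult R (mat_mult R P M m) Q n in
           (\<forall>i<m. \<forall>j<n. i \<noteq> j \<longrightarrow> D i j = \<zero>\<^bsub>R\<^esub>) \<and>
           (\<forall>i. Suc i < min m n \<longrightarrow> D i i divides\<^bsub>R\<^esub> D (Suc i) (Suc i))))"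

definition elementary_divisor_ring :: "('r, 'm) ring_scheme \<Rightarrow> bool" where
  "elementary_divisor_ring R \<longleftrightarrow>
     (\<forall>m n M. is_mat R m n M \<longrightarrow> admits_diagonal_reduction R m n M)"

definition class_ring :: "('a::comm_ring_1) ring" where
  "class_ring = \<lparr>carrier = UNIV, monoid.mult = (*), one = 1, zero = 0, add = (+)\<rparr>"

definition triv_ext :: "('a::comm_ring_1 \<Rightarrow> 'b::ab_group_add \<Rightarrow> 'b) \<Rightarrow> ('a \<times> 'b) ring" where
  "triv_ext smul = \<lparr>carrier = UNIV,
     monoid.mult = (\<lambda>x y. (fst x * fst y, smul (fst x) (snd y) + smul (fst y) (snd x))),
     one = (1, 0), zero = (0, 0),
     add = (\<lambda>x y. (fst x + fst y, snd x + snd y))\<rparr>"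

end

theory Submission
  imports Defs
begin

text \<open>If \<open>A \<propto> E\<close> is an elementary divisor ring, so is its image \<open>A\<close> under the
  projection, and reducing the matrix \<open>((0, x) (0, y))\<close> shows that any two elements of \<open>E\<close>
  are \<open>A\<close>-multiples of a single one; for a \<open>K\<close>-vector space this forces \<open>dim E = 1\<close>.
  Conversely, if \<open>E = K e\<close> then \<open>A \<propto> E\<close> is a homomorphic image of \<open>A \<propto> K\<close>. To reduce
  a matrix over \<open>A \<propto> K\<close>, first diagonalise its \<open>A\<close>-part over \<open>A\<close>. Since \<open>K\<close> is
  divisible, the unipotent matrices \<open>(I, Y)\<close> clear the \<open>K\<close>-part in the rows and columns
  of the nonzero pivots \<open>d\<^sub>1, \<dots>, d\<^sub>r\<close>. The remaining \<open>K\<close>-block is \<open>N / s\<close> for a matrix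
  \<open>N\<close> over \<open>A\<close>, and diagonalising \<open>N\<close> over \<open>A\<close> leaves the diagonal
  \<open>(d\<^sub>1, 0), \<dots>, (d\<^sub>r, 0), (0, g\<^sub>1 / s), (0, g\<^sub>2 / s), \<dots>\<close>, a divisor chain because
  \<open>(d\<^sub>r, 0)\<close> divides every \<open>(0, x)\<close>.\<close>

definition is_smith_form :: "('r, 'm) ring_scheme \<Rightarrow> nat \<Rightarrow> nat \<Rightarrow> (nat \<Rightarrow> nat \<Rightarrow> 'r) \<Rightarrow> bool" where
  "is_smith_form R m n D \<longleftrightarrow>
     (\<forall>i<m. \<forall>j<n. i \<noteq> j \<longrightarrow> D i j = \<zero>\<^bsub>R\<^esub>) \<and>
     (\<forall>i. Suc i < min m n \<longrightarrow> D i i divides\<^bsub>R\<^esub> D (Suc i) (Suc i))"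

lemma admits_diagonal_reduction_iff:
  "admits_diagonal_reduction R m n M \<longleftrightarrow>
     (\<exists>P Q. invertible_mat R m P \<and> invertible_mat R n Q \<and>
        is_smith_form R m n (mat_mult R (mat_mult R P M m) Q n))"
  unfolding admits_diagonal_reduction_def is_smith_form_def Let_def ..

text \<open>Matrices are arbitrary functions \<open>nat \<Rightarrow> nat \<Rightarrow> 'a\<close>, so matrix algebra is
  developed for rings whose carrier is the whole type.\<close>

locale total_cring = cring +
  assumes carrier_UNIV: "carrier R = UNIV"
begin

lemma in_carrier [simp]: "x \<in> carrier R"
  by (simp add: carrier_UNIV)

lemma finsum_swap_lessThan:
  fixes n p :: nat
  shows "(\<Oplus>i\<in>{..<n}. \<Oplus>j\<in>{..<p}. f i j) = (\<Oplus>j\<in>{..<p}. \<Oplus>i\<in>{..<n}. f i j)"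
proof (induction n)
  case (Suc n)
  then show ?case by (simp add: lessThan_Suc finsum_addf)
qed (simp add: finsum_zero)

lemma mat_mult_assoc:
  "mat_mult R (mat_mult R A B n) C p = mat_mult R A (mat_mult R B C p) n"
proof (intro ext)
  fix i l
  have "mat_mult R (mat_mult R A B n) C p i l = (\<Oplus>k\<in>{..<p}. \<Oplus>j\<in>{..<n}. A i j \<otimes> B j k \<otimes> C k l)"
    unfolding mat_mult_def by (simp add: finsum_ldistr)
  also have "\<dots> = (\<Oplus>j\<in>{..<n}. \<Oplus>k\<in>{..<p}. A i j \<otimes> B j k \<otimes> C k l)"
    by (rule finsum_swap_lessThan)
  also have "\<dots> = (\<Oplus>j\<in>{..<n}. \<Oplus>k\<in>{..<p}. A i j \<otimes> (B j k \<otimes> C k l))"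
    by (simp add: m_assoc)
  also have "\<dots> = mat_mult R A (mat_mult R B C p) n i l"
    unfolding mat_mult_def by (simp add: finsum_rdistr)
  finally show "mat_mult R (mat_mult R A B n) C p i l = mat_mult R A (mat_mult R B C p) n i l" .
qed

lemma mat_mult_cong:
  assumes "\<And>j. j < n \<Longrightarrow> A i j = A' i j" "\<And>j. j < n \<Longrightarrow> B j k = B' j k"
  shows "mat_mult R A B n i k = mat_mult R A' B' n i k"
  unfolding mat_mult_def using assms by (intro finsum_cong') auto

lemma mat_mult_id_left:
  assumes "i < m"
  shows "mat_mult R (id_mat R) M m i k = M i k"
proof -
  have "mat_mult R (id_mat R) M m i k = (\<Oplus>j\<in>{..<m}. if i = j then M j k else \<zero>)"
    unfolding mat_mult_def id_mat_def by (intro finsum_cong') auto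
  also have "\<dots> = M i k" using assms add.finprod_singleton[of i "{..<m}" "\<lambda>j. M j k"] by simp
  finally show ?thesis .
qed

lemma mat_mult_id_right:
  assumes "k < n"
  shows "mat_mult R M (id_mat R) n i k = M i k"
proof -
  have "mat_mult R M (id_mat R) n i k = (\<Oplus>j\<in>{..<n}. if k = j then M i j else \<zero>)"
    unfolding mat_mult_def id_mat_def by (intro finsum_cong') auto
  also have "\<dots> = M i k" using assms add.finprod_singleton[of k "{..<n}" "\<lambda>j. M i j"] by simp
  finally show ?thesis .
qed

lemma invertible_id_mat: "invertible_mat R n (id_mat R)"
  unfolding invertible_mat_def
  by (intro conjI exI[of _ "id_mat R"]) (auto simp: is_mat_def mat_eq_def mat_mult_id_left)

lemma mat_eq_mult_inverses:
  assumes "mat_eq n n (mat_mult R P Q n) (id_mat R)" "mat_eq n n (mat_mult R Q' P' n) (id_mat R)"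
  shows "mat_eq n n (mat_mult R (mat_mult R P Q' n) (mat_mult R P' Q n) n) (id_mat R)"
  unfolding mat_eq_def
proof (intro allI impI)
  fix i j assume ij: "i < n" "j < n"
  have "mat_mult R (mat_mult R P Q' n) (mat_mult R P' Q n) n i j
     = mat_mult R P (mat_mult R (mat_mult R Q' P' n) Q n) n i j"
    by (simp add: mat_mult_assoc)
  also have "\<dots> = mat_mult R P (mat_mult R (id_mat R) Q n) n i j"
    using assms(2) by (intro mat_mult_cong) (auto simp: mat_eq_def)
  also have "\<dots> = mat_mult R P Q n i j"
    by (intro mat_mult_cong) (auto simp: mat_mult_id_left)
  also have "\<dots> = id_mat R i j" using assms(1) ij unfolding mat_eq_def by auto
  finally show "mat_mult R (mat_mult R P Q' n) (mat_mult R P' Q n) n i j = id_mat R i j" .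
qed

lemma invertible_mat_mult:
  assumes "invertible_mat R n P" "invertible_mat R n Q"
  shows "invertible_mat R n (mat_mult R P Q n)"
proof -
  obtain P' where "mat_eq n n (mat_mult R P P' n) (id_mat R)" "mat_eq n n (mat_mult R P' P n) (id_mat R)"
    using assms(1) unfolding invertible_mat_def by auto
  moreover obtain Q' where "mat_eq n n (mat_mult R Q Q' n) (id_mat R)" "mat_eq n n (mat_mult R Q' Q n) (id_mat R)"
    using assms(2) unfolding invertible_mat_def by auto
  ultimately show ?thesis
    unfolding invertible_mat_def
    by (intro conjI exI[of _ "mat_mult R Q' P' n"]) (auto simp: is_mat_def mat_eq_mult_inverses)
qed

lemma admits_diagonal_reduction_mult_left:
  assumes "invertible_mat R m P" "admits_diagonal_reduction R m n (mat_mult R P M m)"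
  shows "admits_diagonal_reduction R m n M"
proof -
  obtain P1 Q1 where PQ: "invertible_mat R m P1" "invertible_mat R n Q1"
    and smith: "is_smith_form R m n (mat_mult R (mat_mult R P1 (mat_mult R P M m) m) Q1 n)"
    using assms(2) unfolding admits_diagonal_reduction_iff by auto
  have "is_smith_form R m n (mat_mult R (mat_mult R (mat_mult R P1 P m) M m) Q1 n)"
    using smith by (simp only: mat_mult_assoc)
  moreover have "invertible_mat R m (mat_mult R P1 P m)"
    using PQ(1) assms(1) by (rule invertible_mat_mult)
  ultimately show ?thesis
    unfolding admits_diagonal_reduction_iff using PQ(2) by blast
qed

lemma admits_diagonal_reduction_mult_right:
  assumes "invertible_mat R n Q" "admits_diagonal_reduction R m n (mat_mult R M Q n)"
  shows "admits_diagonal_reduction R m n M"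
proof -
  obtain P1 Q1 where PQ: "invertible_mat R m P1" "invertible_mat R n Q1"
    and smith: "is_smith_form R m n (mat_mult R (mat_mult R P1 (mat_mult R M Q n) m) Q1 n)"
    using assms(2) unfolding admits_diagonal_reduction_iff by auto
  have "is_smith_form R m n (mat_mult R (mat_mult R P1 M m) (mat_mult R Q Q1 n) n)"
    using smith by (simp only: mat_mult_assoc)
  moreover have "invertible_mat R n (mat_mult R Q Q1 n)"
    using assms(1) PQ(2) by (rule invertible_mat_mult)
  ultimately show ?thesis
    unfolding admits_diagonal_reduction_iff using PQ(1) by blast
qed

lemma admits_diagonal_reduction_cong:
  assumes "admits_diagonal_reduction R m n M'" "\<And>i j. i < m \<Longrightarrow> j < n \<Longrightarrow> M i j = M' i j"
  shows "admits_diagonal_reduction R m n M"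
proof -
  have "mat_mult R (mat_mult R P M m) Q n = mat_mult R (mat_mult R P M' m) Q n" for P Q
    by (intro ext mat_mult_cong) (auto simp: assms(2))
  with assms(1) show ?thesis unfolding admits_diagonal_reduction_iff by (simp only:)
qed

lemma is_smith_form_cong:
  assumes "\<And>i j. i < m \<Longrightarrow> j < n \<Longrightarrow> D i j = D' i j"
  shows "is_smith_form R m n D \<longleftrightarrow> is_smith_form R m n D'"
  unfolding is_smith_form_def using assms by auto

lemma mat_mult_inverses_cancel:
  assumes "mat_eq m m (mat_mult R P' P m) (id_mat R)" "mat_eq n n (mat_mult R Q Q' n) (id_mat R)"
    and "i < m" "k < n"
  shows "mat_mult R (mat_mult R P' (mat_mult R (mat_mult R P M m) Q n) m) Q' n i k = M i k"
proof -
  have "mat_mult R (mat_mult R P' (mat_mult R (mat_mult R P M m) Q n) m) Q' n i k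
      = mat_mult R (mat_mult R (mat_mult R P' P m) M m) (mat_mult R Q Q' n) n i k"
    by (simp add: mat_mult_assoc)
  also have "\<dots> = mat_mult R (mat_mult R (id_mat R) M m) (id_mat R) n i k"
    using assms by (intro mat_mult_cong) (auto simp: mat_eq_def)
  also have "\<dots> = M i k"
    using assms(3,4) by (simp add: mat_mult_id_left mat_mult_id_right)
  finally show ?thesis .
qed

lemma admits_diagonal_reduction_if_smith_form:
  assumes "is_smith_form R m n D"
  shows "admits_diagonal_reduction R m n D"
proof -
  have "is_smith_form R m n (mat_mult R (mat_mult R (id_mat R) D m) (id_mat R) n)"
    using assms by (subst is_smith_form_cong[where D' = D]) (simp_all add: mat_mult_id_right mat_mult_id_left)
  then show ?thesis
    unfolding admits_diagonal_reduction_iff using invertible_id_mat by blast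
qed

end

lemma (in ring_hom_cring) hom_mat_mult:
  assumes "carrier R = UNIV"
  shows "h (mat_mult R A B n i k) = mat_mult S (\<lambda>i j. h (A i j)) (\<lambda>i j. h (B i j)) n i k"
  unfolding mat_mult_def using assms by (simp add: comp_def)

lemma (in ring_hom_cring) hom_invertible_mat:
  assumes "carrier R = UNIV" "carrier S = UNIV" "invertible_mat R n P"
  shows "invertible_mat S n (\<lambda>i j. h (P i j))"
proof -
  obtain P' where P': "mat_eq n n (mat_mult R P P' n) (id_mat R)" "mat_eq n n (mat_mult R P' P n) (id_mat R)"
    using assms(3) unfolding invertible_mat_def by auto
  have "h (id_mat R i j) = id_mat S i j" for i j
    unfolding id_mat_def by simp
  with P' show ?thesis
    unfolding invertible_mat_def is_mat_def mat_eq_def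
    by (intro conjI exI[of _ "\<lambda>i j. h (P' i j)"]) (simp_all add: assms(2) flip: hom_mat_mult[OF assms(1)])
qed

lemma (in ring_hom_cring) hom_is_smith_form:
  assumes "carrier R = UNIV" "is_smith_form R m n D"
  shows "is_smith_form S m n (\<lambda>i j. h (D i j))"
proof -
  have "h a divides\<^bsub>S\<^esub> h b" if "a divides\<^bsub>R\<^esub> b" for a b
    using that assms(1) unfolding factor_def by auto
  then show ?thesis using assms(2) unfolding is_smith_form_def by auto
qed

lemma elementary_divisor_ring_surj_hom:
  assumes "ring_hom_cring R S h" "carrier R = UNIV" "carrier S = UNIV" "surj h"
    and "elementary_divisor_ring R"
  shows "elementary_divisor_ring S"
  unfolding elementary_divisor_ring_def
proof (intro allI impI)
  interpret ring_hom_cring R S h by fact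
  fix m n M
  obtain M' :: "nat \<Rightarrow> nat \<Rightarrow> 'a" where M': "M = (\<lambda>i j. h (M' i j))"
    using \<open>surj h\<close> by (metis surj_f_inv_f)
  have "admits_diagonal_reduction R m n M'"
    using assms(2,5) unfolding elementary_divisor_ring_def is_mat_def by auto
  then obtain P Q where PQ: "invertible_mat R m P" "invertible_mat R n Q"
    and smith: "is_smith_form R m n (mat_mult R (mat_mult R P M' m) Q n)"
    unfolding admits_diagonal_reduction_iff by blast
  have "mat_mult S (mat_mult S (\<lambda>i j. h (P i j)) M m) (\<lambda>i j. h (Q i j)) n
      = (\<lambda>i j. h (mat_mult R (mat_mult R P M' m) Q n i j))"
    unfolding M' by (intro ext) (simp add: hom_mat_mult[OF assms(2)])
  with hom_is_smith_form[OF assms(2) smith] show "admits_diagonal_reduction S m n M"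
    unfolding admits_diagonal_reduction_iff
    by (metis PQ hom_invertible_mat[OF assms(2,3)])
qed

lemma class_ring_simps [simp]:
  "carrier (class_ring :: 'a::comm_ring_1 ring) = UNIV"
  "monoid.mult (class_ring :: 'a ring) = (*)"
  "ring.add (class_ring :: 'a ring) = (+)"
  "monoid.one (class_ring :: 'a ring) = 1"
  "ring.zero (class_ring :: 'a ring) = 0"
  by (simp_all add: class_ring_def)

interpretation class_ring: total_cring "class_ring :: 'a::comm_ring_1 ring"
  by (intro total_cring.intro total_cring_axioms.intro cringI abelian_groupI comm_monoidI)
    (auto simp: algebra_simps intro: exI[of _ "- _"])

lemma finsum_class_ring: "finite A \<Longrightarrow> finsum class_ring f A = sum f A"
  by (induct A rule: finite_induct) (simp_all add: class_ring.finsum_insert)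

lemma mat_mult_class_ring:
  "mat_mult class_ring A B n = (\<lambda>i k. \<Sum>j<n. A i j * B j k)"
  unfolding mat_mult_def by (simp add: finsum_class_ring)

lemma divides_class_ring: "a divides\<^bsub>class_ring\<^esub> b \<longleftrightarrow> a dvd b"
  unfolding factor_def dvd_def by auto

lemma is_smith_form_class_ring:
  "is_smith_form class_ring m n D \<longleftrightarrow>
     (\<forall>i<m. \<forall>j<n. i \<noteq> j \<longrightarrow> D i j = 0) \<and> (\<forall>i. Suc i < min m n \<longrightarrow> D i i dvd D (Suc i) (Suc i))"
  unfolding is_smith_form_def divides_class_ring by simp

lemma triv_ext_simps [simp]:
  "carrier (triv_ext sm) = UNIV"
  "monoid.mult (triv_ext sm) = (\<lambda>x y. (fst x * fst y, sm (fst x) (snd y) + sm (fst y) (snd x)))"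
  "ring.add (triv_ext sm) = (\<lambda>x y. (fst x + fst y, snd x + snd y))"
  "monoid.one (triv_ext sm) = (1, 0)"
  "ring.zero (triv_ext sm) = (0, 0)"
  by (simp_all add: triv_ext_def)

context module
begin

lemma total_cring_triv_ext: "total_cring (triv_ext scale)"
proof -
  have "cring (triv_ext scale)"
    by (intro cringI abelian_groupI comm_monoidI) (auto simp: algebra_simps intro: exI[of _ "- _"])
  then show ?thesis by (simp add: total_cring_def total_cring_axioms_def)
qed

lemma finsum_triv_ext:
  "finite A \<Longrightarrow> finsum (triv_ext scale) f A = (\<Sum>a\<in>A. fst (f a), \<Sum>a\<in>A. snd (f a))"
proof -
  interpret total_cring "triv_ext scale" by (rule total_cring_triv_ext)
  show "finite A \<Longrightarrow> finsum (triv_ext scale) f A = (\<Sum>a\<in>A. fst (f a), \<Sum>a\<in>A. snd (f a))"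
    by (induct A rule: finite_induct) (simp_all add: finsum_insert)
qed

lemma mat_mult_triv_ext:
  "mat_mult (triv_ext scale) A B n = (\<lambda>i k. (\<Sum>j<n. fst (A i j) * fst (B j k),
      \<Sum>j<n. scale (fst (A i j)) (snd (B j k)) + scale (fst (B j k)) (snd (A i j))))"
  unfolding mat_mult_def by (simp add: finsum_triv_ext)

lemma ring_hom_fst: "ring_hom_cring (triv_ext scale) class_ring fst"
  by (intro ring_hom_cring.intro ring_hom_cring_axioms.intro ring_hom_memI
      total_cring.axioms(1)[OF total_cring_triv_ext] class_ring.cring_axioms) auto

lemma ring_hom_embed: "ring_hom_cring class_ring (triv_ext scale) (\<lambda>a. (a, 0))"
  by (intro ring_hom_cring.intro ring_hom_cring_axioms.intro ring_hom_memI
      total_cring.axioms(1)[OF total_cring_triv_ext] class_ring.cring_axioms) auto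

lemma invertible_mat_triv_ext_embed:
  "invertible_mat class_ring n P \<Longrightarrow> invertible_mat (triv_ext scale) n (\<lambda>i j. (P i j, 0))"
  using ring_hom_cring.hom_invertible_mat[OF ring_hom_embed] by simp

lemma mat_mult_triv_ext_unipotent_right:
  assumes "k < n"
  shows "mat_mult (triv_ext scale) M (\<lambda>i j. (if i = j then 1 else 0, Y i j)) n i k
    = (fst (M i k), snd (M i k) + (\<Sum>j<n. scale (fst (M i j)) (Y j k)))"
  using assms
  by (simp add: mat_mult_triv_ext sum.distrib if_distrib[of "\<lambda>a. scale a _"] if_distrib[of "(*) _"]
      if_distrib[of "\<lambda>a. a * _"] cong: if_cong)

lemma mat_mult_triv_ext_unipotent_left:
  assumes "i < m"
  shows "mat_mult (triv_ext scale) (\<lambda>i j. (if i = j then 1 else 0, X i j)) M m i k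
    = (fst (M i k), snd (M i k) + (\<Sum>j<m. scale (fst (M j k)) (X i j)))"
  using assms
  by (simp add: mat_mult_triv_ext sum.distrib if_distrib[of "\<lambda>a. scale a _"] if_distrib[of "(*) _"]
      if_distrib[of "\<lambda>a. a * _"] cong: if_cong)

lemma invertible_mat_triv_ext_unipotent:
  "invertible_mat (triv_ext scale) n (\<lambda>i j. (if i = j then 1 else 0, Y i j))"
proof -
  have "mat_eq n n (mat_mult (triv_ext scale) (\<lambda>i j. (if i = j then 1 else 0, Y i j))
      (\<lambda>i j. (if i = j then 1 else 0, Y' i j)) n) (id_mat (triv_ext scale))"
    if "\<And>i j. Y i j + Y' i j = 0" for Y Y'
    using that by (auto simp: mat_eq_def id_mat_def mat_mult_triv_ext_unipotent_right
        if_distrib[of "\<lambda>a. scale a _"] cong: if_cong)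
  from this[of Y "\<lambda>i j. - Y i j"] this[of "\<lambda>i j. - Y i j" Y] show ?thesis
    unfolding invertible_mat_def is_mat_def
    by (intro conjI exI[of _ "\<lambda>i j. (if i = j then 1 else 0, - Y i j)"]) simp_all
qed

end

lemma (in module) elementary_divisor_ring_class_ring_if_triv_ext:
  assumes "elementary_divisor_ring (triv_ext scale)"
  shows "elementary_divisor_ring (class_ring :: 'a ring)"
  by (rule elementary_divisor_ring_surj_hom[OF ring_hom_fst _ _ _ assms])
    (auto intro: surjI[of fst "\<lambda>a. (a, 0)"])

lemma (in module) triv_ext_edr_imp_common_generator:
  assumes "elementary_divisor_ring (triv_ext scale)"
  shows "\<exists>f a b. x = scale a f \<and> y = scale b f"
proof -
  interpret T: total_cring "triv_ext scale" by (rule total_cring_triv_ext)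
  define M where "M = (\<lambda>(i::nat) (j::nat). if j = 0 then (0::'a, x) else (0, y))"
  have "admits_diagonal_reduction (triv_ext scale) 1 2 M"
    using assms unfolding elementary_divisor_ring_def is_mat_def by auto
  then obtain P Q where PQ: "invertible_mat (triv_ext scale) 1 P" "invertible_mat (triv_ext scale) 2 Q"
    and smith: "is_smith_form (triv_ext scale) 1 2 (mat_mult (triv_ext scale) (mat_mult (triv_ext scale) P M 1) Q 2)"
    unfolding admits_diagonal_reduction_iff by auto
  define D where "D = mat_mult (triv_ext scale) (mat_mult (triv_ext scale) P M 1) Q 2"
  obtain P' where P': "mat_eq 1 1 (mat_mult (triv_ext scale) P' P 1) (id_mat (triv_ext scale))"
    using PQ unfolding invertible_mat_def by auto
  obtain Q' where Q': "mat_eq 2 2 (mat_mult (triv_ext scale) Q Q' 2) (id_mat (triv_ext scale))"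
    using PQ unfolding invertible_mat_def by auto
  have D01: "D 0 1 = (0, 0)" using smith unfolding D_def is_smith_form_def by auto
  have D00: "fst (D 0 0) = 0"
    unfolding D_def M_def by (simp add: mat_mult_triv_ext numeral_2_eq_2 lessThan_Suc)
  have M_eq: "M 0 k = mat_mult (triv_ext scale) (mat_mult (triv_ext scale) P' D 1) Q' 2 0 k" if "k < 2" for k
    unfolding D_def by (rule T.mat_mult_inverses_cancel[OF P' Q', symmetric]) (use that in auto)
  have "x = scale (fst (Q' 0 0) * fst (P' 0 0)) (snd (D 0 0))"
    using M_eq[of 0] D01 D00 by (simp add: mat_mult_triv_ext M_def numeral_2_eq_2 lessThan_Suc)
  moreover have "y = scale (fst (Q' 0 1) * fst (P' 0 0)) (snd (D 0 0))"
    using M_eq[of 1] D01 D00 by (simp add: mat_mult_triv_ext M_def numeral_2_eq_2 lessThan_Suc)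
  ultimately show ?thesis by blast
qed

lemma (in vector_space) dim_UNIV_eq_1_iff:
  "dim UNIV = 1 \<longleftrightarrow> (\<exists>e0. e0 \<noteq> 0 \<and> (\<forall>e. \<exists>c. e = scale c e0))"
proof
  assume "dim UNIV = 1"
  then obtain B where B: "independent B" "UNIV \<subseteq> span B" "card B = 1"
    using basis_exists[of UNIV] by metis
  then obtain e0 where "B = {e0}" using card_1_singletonE by blast
  then show "\<exists>e0. e0 \<noteq> 0 \<and> (\<forall>e. \<exists>c. e = scale c e0)"
    using B span_singleton[of e0] by (auto simp: image_def)
next
  assume "\<exists>e0. e0 \<noteq> 0 \<and> (\<forall>e. \<exists>c. e = scale c e0)"
  then obtain e0 where e0: "e0 \<noteq> 0" "\<forall>e. \<exists>c. e = scale c e0" by blast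
  then have "span {e0} = UNIV" unfolding span_singleton by (metis UNIV_eq_I rangeI)
  then show "dim UNIV = 1"
    using dim_eq_card[of "{e0}" UNIV] e0 by auto
qed

abbreviation fract_of :: "'a::idom \<Rightarrow> 'a fract" where
  "fract_of a \<equiv> Fract a 1"

lemma fract_of_eq_0_iff [simp]: "fract_of a = 0 \<longleftrightarrow> a = 0"
  by (simp add: Zero_fract_def eq_fract)

lemma Fract_0_left [simp]: "Fract 0 b = 0"
  by (metis Zero_fract_def eq_fract(3))

lemma fract_of_1 [simp]: "fract_of 1 = 1"
  by (simp add: One_fract_def)

lemma sum_Fract: "(\<Sum>j\<in>A. Fract (f j) s) = Fract (sum f A) s"
proof (induct A rule: infinite_finite_induct)
  case (insert x F)
  then show ?case by (cases "s = 0") (simp_all add: eq_fract algebra_simps)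
qed simp_all

lemma fract_of_add: "fract_of (a + b) = fract_of a + fract_of b"
  by simp

lemma fract_of_mult: "fract_of (a * b) = fract_of a * fract_of b"
  by simp

interpretation fract_module: module "\<lambda>(a::'a::idom) (x::'a fract). fract_of a * x"
  by unfold_locales (simp_all only: fract_of_add fract_of_mult fract_of_1 algebra_simps mult_1_right)

lemma module_fract_of_scale:
  assumes "vector_space (scale :: 'a::idom fract \<Rightarrow> 'b::ab_group_add \<Rightarrow> 'b)"
  shows "module (\<lambda>a. scale (fract_of a))"
proof -
  interpret vector_space scale by fact
  show ?thesis
    by unfold_locales (simp_all only: fract_of_add fract_of_mult fract_of_1 scale_right_distrib
        scale_left_distrib scale_scale scale_one)
qed

lemma dim_eq_1_if_triv_ext_edr:
  fixes scale :: "'a::idom fract \<Rightarrow> 'b::ab_group_add \<Rightarrow> 'b" and e0 :: 'b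
  assumes "vector_space scale" "e0 \<noteq> 0"
    and "elementary_divisor_ring (triv_ext (\<lambda>a. scale (fract_of a)))"
  shows "vector_space.dim scale UNIV = 1"
proof -
  interpret V: vector_space scale by fact
  interpret M: module "\<lambda>a. scale (fract_of a)" by (rule module_fract_of_scale) fact
  have "\<exists>c. e = scale c e0" for e
  proof -
    obtain f a b where f: "e0 = scale (fract_of a) f" "e = scale (fract_of b) f"
      using M.triv_ext_edr_imp_common_generator[OF assms(3)] by blast
    with \<open>e0 \<noteq> 0\<close> have "fract_of a \<noteq> 0" by auto
    then have "f = scale (inverse (fract_of a)) e0"
      using f(1) by (metis V.scale_one V.scale_scale left_inverse)
    then have "e = scale (fract_of b * inverse (fract_of a)) e0"
      using f(2) by (simp only: V.scale_scale)
    then show ?thesis ..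
  qed
  with \<open>e0 \<noteq> 0\<close> show ?thesis using V.dim_UNIV_eq_1_iff by blast
qed

definition nonzero_diag_prefix :: "nat \<Rightarrow> nat \<Rightarrow> nat \<Rightarrow> (nat \<Rightarrow> nat \<Rightarrow> 'a::zero) \<Rightarrow> bool" where
  "nonzero_diag_prefix m n r D \<longleftrightarrow> r \<le> min m n \<and> (\<forall>i<r. D i i \<noteq> 0) \<and>
     (\<forall>i<m. \<forall>k<n. r \<le> i \<or> r \<le> k \<longrightarrow> D i k = 0)"

lemma smith_form_nonzero_diag_prefix:
  fixes D :: "nat \<Rightarrow> nat \<Rightarrow> 'a::comm_ring_1"
  assumes "is_smith_form class_ring m n D"
  obtains r where "nonzero_diag_prefix m n r D"
proof
  define r where "r = (LEAST i. min m n \<le> i \<or> D i i = 0)"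
  have diag: "D i k = 0" if "i < m" "k < n" "i \<noteq> k" for i k
    using assms that unfolding is_smith_form_class_ring by blast
  have r_le: "r \<le> min m n" unfolding r_def by (rule Least_le) simp
  have pivots: "D i i \<noteq> 0" if "i < r" for i
    using not_less_Least[OF that[unfolded r_def]] by simp
  have "min m n \<le> r \<or> D r r = 0" unfolding r_def by (rule LeastI[of _ "min m n"]) simp
  then have base: "r < min m n \<longrightarrow> D r r = 0" by auto
  have "j < min m n \<longrightarrow> D j j = 0" if "r \<le> j" for j
    using that
  proof (induction j rule: dec_induct)
    case (step j)
    then show ?case
      using assms unfolding is_smith_form_class_ring by (metis Suc_lessD dvd_0_left)
  qed (rule base)
  with diag r_le pivots show "nonzero_diag_prefix m n r D"
    unfolding nonzero_diag_prefix_def by (metis less_le_trans min_less_iff_conj not_le)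
qed

abbreviation fract_ext :: "('a::idom \<times> 'a fract) ring" where
  "fract_ext \<equiv> triv_ext (\<lambda>a x. fract_of a * x)"

interpretation fract_ext: total_cring "fract_ext :: ('a::idom \<times> 'a fract) ring"
  by (rule fract_module.total_cring_triv_ext)

lemma fract_ext_admits_if_rows_cleared:
  fixes M :: "nat \<Rightarrow> nat \<Rightarrow> 'a::idom \<times> 'a fract"
  assumes diag: "\<And>i k. i < m \<Longrightarrow> k < n \<Longrightarrow> i \<noteq> k \<Longrightarrow> fst (M i k) = 0"
    and pivots: "\<And>i. i < r \<Longrightarrow> fst (M i i) \<noteq> 0" and "r \<le> n"
    and "admits_diagonal_reduction fract_ext m n (\<lambda>i k. (fst (M i k), if i < r then 0 else snd (M i k)))"
  shows "admits_diagonal_reduction fract_ext m n M"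
proof -
  define Y where "Y = (\<lambda>j k. if j < r then - snd (M j k) / fract_of (fst (M j j)) else 0)"
  have "mat_mult fract_ext M (\<lambda>i j. (if i = j then 1 else 0, Y i j)) n i k
      = (fst (M i k), if i < r then 0 else snd (M i k))" if "i < m" "k < n" for i k
  proof -
    have "(\<Sum>j<n. fract_of (fst (M i j)) * Y j k) = (\<Sum>j<n. if j = i then fract_of (fst (M i i)) * Y i k else 0)"
      by (rule sum.cong) (auto simp: Y_def diag \<open>i < m\<close>)
    also have "\<dots> = (if i < r then - snd (M i k) else 0)"
      using pivots \<open>r \<le> n\<close> by (auto simp: Y_def)
    finally show ?thesis
      using \<open>k < n\<close> by (simp add: fract_module.mat_mult_triv_ext_unipotent_right)
  qed
  then show ?thesis
    by (rule fract_ext.admits_diagonal_reduction_mult_right[OF fract_module.invertible_mat_triv_ext_unipotent,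
          OF fract_ext.admits_diagonal_reduction_cong[OF assms(4)]])
qed

lemma fract_ext_admits_if_columns_cleared:
  fixes M :: "nat \<Rightarrow> nat \<Rightarrow> 'a::idom \<times> 'a fract"
  assumes diag: "\<And>i k. i < m \<Longrightarrow> k < n \<Longrightarrow> i \<noteq> k \<Longrightarrow> fst (M i k) = 0"
    and pivots: "\<And>i. i < r \<Longrightarrow> fst (M i i) \<noteq> 0" and "r \<le> m"
    and "admits_diagonal_reduction fract_ext m n (\<lambda>i k. (fst (M i k), if k < r then 0 else snd (M i k)))"
  shows "admits_diagonal_reduction fract_ext m n M"
proof -
  define X where "X = (\<lambda>i j. if j < r then - snd (M i j) / fract_of (fst (M j j)) else 0)"
  have "mat_mult fract_ext (\<lambda>i j. (if i = j then 1 else 0, X i j)) M m i k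
      = (fst (M i k), if k < r then 0 else snd (M i k))" if "i < m" "k < n" for i k
  proof -
    have "(\<Sum>j<m. fract_of (fst (M j k)) * X i j) = (\<Sum>j<m. if j = k then fract_of (fst (M k k)) * X i k else 0)"
      by (rule sum.cong) (auto simp: X_def diag \<open>k < n\<close>)
    also have "\<dots> = (if k < r then - snd (M i k) else 0)"
      using pivots \<open>r \<le> m\<close> by (auto simp: X_def)
    finally show ?thesis
      using \<open>i < m\<close> by (simp add: fract_module.mat_mult_triv_ext_unipotent_left)
  qed
  then show ?thesis
    by (rule fract_ext.admits_diagonal_reduction_mult_left[OF fract_module.invertible_mat_triv_ext_unipotent,
          OF fract_ext.admits_diagonal_reduction_cong[OF assms(4)]])
qed

lemma Fract_common_denominator:
  assumes "finite (S :: 'a::idom fract set)"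
  obtains s where "s \<noteq> 0" "\<forall>x\<in>S. \<exists>a. x = Fract a s"
  using assms
proof (induction S arbitrary: thesis rule: finite_induct)
  case empty
  show ?case by (rule empty.prems[of 1]) simp_all
next
  case (insert x F)
  obtain s where s: "s \<noteq> 0" "\<forall>y\<in>F. \<exists>a. y = Fract a s" by (rule insert.IH)
  obtain p q where x: "x = Fract p q" "q \<noteq> 0" by (cases x)
  have "x = Fract (s * p) (s * q)" using x s(1) by (simp add: mult_fract_cancel)
  moreover have "\<exists>a. y = Fract a (s * q)" if "y \<in> F" for y
    using s(2) that x(2) by (metis mult.commute mult_fract_cancel)
  ultimately show ?case
    using s(1) x(2) by (intro insert.prems[of "s * q"]) auto
qed

lemma sum_lessThan_split_shift:
  fixes f :: "nat \<Rightarrow> 'a::comm_monoid_add"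
  assumes "r \<le> m"
  shows "(\<Sum>j<m. f j) = (\<Sum>j<r. f j) + (\<Sum>j<m - r. f (j + r))"
proof -
  obtain d where "m = r + d" using assms le_Suc_ex by blast
  moreover have "(\<Sum>j<r + d. f j) = (\<Sum>j<r. f j) + (\<Sum>j<d. f (j + r))"
    by (induction d) (simp_all add: ac_simps)
  ultimately show ?thesis by simp
qed

definition pad_id :: "nat \<Rightarrow> (nat \<Rightarrow> nat \<Rightarrow> 'a::comm_ring_1) \<Rightarrow> nat \<Rightarrow> nat \<Rightarrow> 'a" where
  "pad_id r P = (\<lambda>i j. if i < r \<or> j < r then (if i = j then 1 else 0) else P (i - r) (j - r))"

lemma sum_pad_id_mult:
  assumes "r \<le> m"
  shows "(\<Sum>j<m. pad_id r P i j * u j) = (if i < r then u i else \<Sum>j<m - r. P (i - r) j * u (j + r))"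
  unfolding sum_lessThan_split_shift[OF assms]
  by (simp add: pad_id_def if_distrib[of "\<lambda>x. x * _"] cong: if_cong)

lemma sum_mult_pad_id:
  assumes "r \<le> n"
  shows "(\<Sum>j<n. u j * pad_id r Q j k) = (if k < r then u k else \<Sum>j<n - r. u (j + r) * Q j (k - r))"
  unfolding sum_lessThan_split_shift[OF assms]
  by (simp add: pad_id_def if_distrib[of "\<lambda>x. _ * x"] cong: if_cong)

lemma invertible_mat_pad_id:
  assumes "r \<le> m" "invertible_mat class_ring (m - r) P"
  shows "invertible_mat class_ring m (pad_id r P)"
proof -
  obtain P' where P': "mat_eq (m - r) (m - r) (mat_mult class_ring P P' (m - r)) (id_mat class_ring)"
    "mat_eq (m - r) (m - r) (mat_mult class_ring P' P (m - r)) (id_mat class_ring)"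
    using assms(2) unfolding invertible_mat_def by auto
  have "mat_eq m m (mat_mult class_ring (pad_id r A) (pad_id r B) m) (id_mat class_ring)"
    if AB: "mat_eq (m - r) (m - r) (mat_mult class_ring A B (m - r)) (id_mat class_ring)" for A B
    unfolding mat_eq_def mat_mult_class_ring sum_pad_id_mult[OF assms(1)]
  proof (intro allI impI)
    fix i k assume ik: "i < m" "k < m"
    show "(if i < r then pad_id r B i k else \<Sum>j<m - r. A (i - r) j * pad_id r B (j + r) k)
        = id_mat class_ring i k"
    proof (cases "i < r \<or> k < r")
      case True
      moreover have "(\<Sum>j<m - r. A (i - r) j * pad_id r B (j + r) k) = 0" if "k < r"
        using that by (intro sum.neutral) (auto simp: pad_id_def)
      ultimately show ?thesis by (auto simp: pad_id_def id_mat_def)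
    next
      case False
      then have "(\<Sum>j<m - r. A (i - r) j * pad_id r B (j + r) k) = mat_mult class_ring A B (m - r) (i - r) (k - r)"
        by (simp add: pad_id_def mat_mult_class_ring)
      also have "\<dots> = id_mat class_ring i k"
        using AB False ik unfolding mat_eq_def by (auto simp: id_mat_def)
      finally show ?thesis using False by simp
    qed
  qed
  from this[OF P'(1)] this[OF P'(2)] show ?thesis
    unfolding invertible_mat_def is_mat_def by auto
qed

lemma mat_mult_pad_id_top_left:
  assumes "r \<le> m" "r \<le> n" "i < m" "k < n"
    and D_zero: "\<And>i k. i < m \<Longrightarrow> k < n \<Longrightarrow> r \<le> i \<or> r \<le> k \<Longrightarrow> D i k = 0"
  shows "mat_mult class_ring (mat_mult class_ring (pad_id r P) D m) (pad_id r Q) n i k = D i k"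
proof -
  have "(\<Sum>l<m. pad_id r P i l * D l j) = D i j" if "j < n" for j
    unfolding sum_pad_id_mult[OF assms(1)] using D_zero assms(3) that by auto
  then have "mat_mult class_ring (mat_mult class_ring (pad_id r P) D m) (pad_id r Q) n i k
      = (\<Sum>j<n. D i j * pad_id r Q j k)"
    unfolding mat_mult_class_ring by simp
  also have "\<dots> = D i k"
    unfolding sum_mult_pad_id[OF assms(2)] using D_zero assms(3,4) by auto
  finally show ?thesis .
qed

lemma mat_mult_pad_id_bottom_right:
  assumes "r \<le> m" "r \<le> n"
    and N: "\<And>i k. i < r \<or> k < r \<Longrightarrow> N i k = 0"
  shows "mat_mult class_ring (mat_mult class_ring (pad_id r P) N m) (pad_id r Q) n i k
    = (if i < r \<or> k < r then 0
       else mat_mult class_ring (mat_mult class_ring P (\<lambda>i k. N (i + r) (k + r)) (m - r)) Q (n - r) (i - r) (k - r))"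
proof -
  have "(\<Sum>l<m. pad_id r P i l * N l j)
      = (if i < r \<or> j < r then 0 else \<Sum>l<m - r. P (i - r) l * N (l + r) (j - r + r))" for j
    unfolding sum_pad_id_mult[OF assms(1)] using N by auto
  then have "mat_mult class_ring (mat_mult class_ring (pad_id r P) N m) (pad_id r Q) n i k
      = (\<Sum>j<n. (if i < r \<or> j < r then 0 else \<Sum>l<m - r. P (i - r) l * N (l + r) (j - r + r)) * pad_id r Q j k)"
    unfolding mat_mult_class_ring by simp
  also have "\<dots> = (if i < r \<or> k < r then 0
       else mat_mult class_ring (mat_mult class_ring P (\<lambda>i k. N (i + r) (k + r)) (m - r)) Q (n - r) (i - r) (k - r))"
    unfolding sum_mult_pad_id[OF assms(2)] mat_mult_class_ring by auto
  finally show ?thesis .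
qed

lemma mat_mult_fract_ext_embed:
  "mat_mult fract_ext (mat_mult fract_ext (\<lambda>i j. (P i j, 0)) (\<lambda>i k. (D i k, Fract (N i k) s)) m)
      (\<lambda>i j. (Q i j, 0)) n
   = (\<lambda>i k. (mat_mult class_ring (mat_mult class_ring P D m) Q n i k,
        Fract (mat_mult class_ring (mat_mult class_ring P N m) Q n i k) s))"
  unfolding fract_module.mat_mult_triv_ext mat_mult_class_ring
  by (simp add: sum_Fract ac_simps)

lemma is_smith_form_fract_ext_block:
  fixes D G :: "nat \<Rightarrow> nat \<Rightarrow> 'a::idom"
  assumes smith_D: "is_smith_form class_ring m n D" and r: "nonzero_diag_prefix m n r D"
    and smith_G: "is_smith_form class_ring (m - r) (n - r) G"
  shows "is_smith_form fract_ext m n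
    (\<lambda>i k. (D i k, Fract (if i < r \<or> k < r then 0 else G (i - r) (k - r)) s))"
  unfolding is_smith_form_def
proof (intro conjI allI impI)
  fix i k assume "i < m" "k < n" "i \<noteq> k"
  then show "(D i k, Fract (if i < r \<or> k < r then 0 else G (i - r) (k - r)) s) = \<zero>\<^bsub>fract_ext\<^esub>"
    using smith_D smith_G unfolding is_smith_form_class_ring by auto
next
  fix i assume i: "Suc i < min m n"
  have r_le: "r \<le> min m n" and pivots: "\<And>i. i < r \<Longrightarrow> D i i \<noteq> 0"
    and zeros: "\<And>i. r \<le> i \<Longrightarrow> i < min m n \<Longrightarrow> D i i = 0"
    using r unfolding nonzero_diag_prefix_def by auto
  consider "Suc i < r" | "Suc i = r" | "r \<le> i" by linarith
  then show "(D i i, Fract (if i < r \<or> i < r then 0 else G (i - r) (i - r)) s)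
      divides\<^bsub>fract_ext\<^esub>
    (D (Suc i) (Suc i), Fract (if Suc i < r \<or> Suc i < r then 0 else G (Suc i - r) (Suc i - r)) s)"
  proof cases
    case 1
    obtain b where "D (Suc i) (Suc i) = D i i * b"
      using smith_D i unfolding is_smith_form_class_ring by blast
    with 1 show ?thesis unfolding factor_def by (intro bexI[of _ "(b, 0)"]) simp_all
  next
    case 2
    text \<open>\<open>(d, 0) \<otimes> (0, x / d) = (0, x)\<close> with \<open>x / d\<close> written as \<open>Fract g (d * s)\<close>.\<close>
    then have "D i i \<noteq> 0" "D (Suc i) (Suc i) = 0" using pivots zeros i by auto
    with 2 show ?thesis unfolding factor_def
      by (intro bexI[of _ "(0, Fract (G 0 0) (D i i * s))"]) (simp_all add: mult_fract_cancel)
  next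
    case 3
    have "Suc (i - r) < min (m - r) (n - r)" using i 3 by auto
    then obtain b where "G (Suc (i - r)) (Suc (i - r)) = G (i - r) (i - r) * b"
      using smith_G unfolding is_smith_form_class_ring by blast
    with 3 i zeros show ?thesis unfolding factor_def
      by (intro bexI[of _ "(b, 0)"]) (simp_all add: Suc_diff_le mult.commute)
  qed
qed

lemma fract_ext_admits_block:
  fixes D N :: "nat \<Rightarrow> nat \<Rightarrow> 'a::idom"
  assumes A: "elementary_divisor_ring (class_ring :: 'a ring)"
    and smith_D: "is_smith_form class_ring m n D" and r: "nonzero_diag_prefix m n r D"
    and N: "\<And>i k. i < r \<or> k < r \<Longrightarrow> N i k = 0"
  shows "admits_diagonal_reduction fract_ext m n (\<lambda>i k. (D i k, Fract (N i k) s))"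
proof -
  have r_le: "r \<le> m" "r \<le> n" using r by (auto simp: nonzero_diag_prefix_def)
  have D_zero: "\<And>i k. i < m \<Longrightarrow> k < n \<Longrightarrow> r \<le> i \<or> r \<le> k \<Longrightarrow> D i k = 0"
    using r unfolding nonzero_diag_prefix_def by blast
  have "admits_diagonal_reduction class_ring (m - r) (n - r) (\<lambda>i k. N (i + r) (k + r))"
    using A unfolding elementary_divisor_ring_def is_mat_def by simp
  then obtain P Q where P: "invertible_mat class_ring (m - r) P" and Q: "invertible_mat class_ring (n - r) Q"
    and smith_G: "is_smith_form class_ring (m - r) (n - r)
      (mat_mult class_ring (mat_mult class_ring P (\<lambda>i k. N (i + r) (k + r)) (m - r)) Q (n - r))"
    unfolding admits_diagonal_reduction_iff by blast
  have "mat_mult fract_ext (mat_mult fract_ext (\<lambda>i j. (pad_id r P i j, 0)) (\<lambda>i k. (D i k, Fract (N i k) s)) m)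
      (\<lambda>i j. (pad_id r Q i j, 0)) n i k
    = (D i k, Fract (if i < r \<or> k < r then 0
        else mat_mult class_ring (mat_mult class_ring P (\<lambda>i k. N (i + r) (k + r)) (m - r)) Q (n - r) (i - r) (k - r)) s)"
    if "i < m" "k < n" for i k
    unfolding mat_mult_fract_ext_embed
    by (simp add: mat_mult_pad_id_top_left[OF r_le that D_zero] mat_mult_pad_id_bottom_right[OF r_le N])
  then have "admits_diagonal_reduction fract_ext m n
      (mat_mult fract_ext (mat_mult fract_ext (\<lambda>i j. (pad_id r P i j, 0)) (\<lambda>i k. (D i k, Fract (N i k) s)) m)
        (\<lambda>i j. (pad_id r Q i j, 0)) n)"
    by (rule fract_ext.admits_diagonal_reduction_cong[OF fract_ext.admits_diagonal_reduction_if_smith_form,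
          OF is_smith_form_fract_ext_block[OF smith_D r smith_G]])
  then have "admits_diagonal_reduction fract_ext m n
      (mat_mult fract_ext (\<lambda>i j. (pad_id r P i j, 0)) (\<lambda>i k. (D i k, Fract (N i k) s)) m)"
    by (rule fract_ext.admits_diagonal_reduction_mult_right[OF
          fract_module.invertible_mat_triv_ext_embed[OF invertible_mat_pad_id[OF r_le(2) Q]]])
  then show ?thesis
    by (rule fract_ext.admits_diagonal_reduction_mult_left[OF
          fract_module.invertible_mat_triv_ext_embed[OF invertible_mat_pad_id[OF r_le(1) P]]])
qed

lemma fract_ext_admits_if_fst_smith_form:
  fixes M :: "nat \<Rightarrow> nat \<Rightarrow> 'a::idom \<times> 'a fract"
  assumes A: "elementary_divisor_ring (class_ring :: 'a ring)"
    and smith: "is_smith_form class_ring m n (\<lambda>i k. fst (M i k))"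
  shows "admits_diagonal_reduction fract_ext m n M"
proof -
  obtain r where r: "nonzero_diag_prefix m n r (\<lambda>i k. fst (M i k))"
    using smith_form_nonzero_diag_prefix[OF smith] by blast
  have "finite ((\<lambda>(i, k). snd (M i k)) ` ({..<m} \<times> {..<n}))" by simp
  then obtain s where "s \<noteq> 0" and s: "\<forall>x\<in>(\<lambda>(i, k). snd (M i k)) ` ({..<m} \<times> {..<n}). \<exists>a. x = Fract a s"
    by (rule Fract_common_denominator)
  define N where "N = (\<lambda>i k. if i < r \<or> k < r then 0 else SOME a. snd (M i k) = Fract a s)"
  have "admits_diagonal_reduction fract_ext m n (\<lambda>i k. (fst (M i k), Fract (N i k) s))"
    by (rule fract_ext_admits_block[OF A smith r]) (simp add: N_def)
  moreover have "Fract (N i k) s = (if i < r \<or> k < r then 0 else snd (M i k))" if "i < m" "k < n" for i k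
  proof -
    have "snd (M i k) \<in> (\<lambda>(i, k). snd (M i k)) ` ({..<m} \<times> {..<n})" using that by force
    then have "\<exists>a. snd (M i k) = Fract a s" using s by blast
    then have "snd (M i k) = Fract (SOME a. snd (M i k) = Fract a s) s" by (rule someI_ex)
    from this[symmetric] show ?thesis unfolding N_def by simp
  qed
  ultimately have cleared: "admits_diagonal_reduction fract_ext m n
      (\<lambda>i k. (fst (M i k), if k < r then 0 else if i < r then 0 else snd (M i k)))"
    by (elim fract_ext.admits_diagonal_reduction_cong) simp
  have diag: "\<And>i k. i < m \<Longrightarrow> k < n \<Longrightarrow> i \<noteq> k \<Longrightarrow> fst (M i k) = 0"
    using smith unfolding is_smith_form_class_ring by blast
  have pivots: "\<And>i. i < r \<Longrightarrow> fst (M i i) \<noteq> 0" and r_le: "r \<le> m" "r \<le> n"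
    using r unfolding nonzero_diag_prefix_def by auto
  define M' where "M' = (\<lambda>i k. (fst (M i k), if i < r then 0 else snd (M i k)))"
  have "admits_diagonal_reduction fract_ext m n (\<lambda>i k. (fst (M' i k), if k < r then 0 else snd (M' i k)))"
    using cleared by (simp add: M'_def cong: if_cong)
  then have "admits_diagonal_reduction fract_ext m n M'"
    by (rule fract_ext_admits_if_columns_cleared[rotated 3]) (simp_all add: M'_def diag pivots r_le)
  then show ?thesis
    using fract_ext_admits_if_rows_cleared[of m n M r] diag pivots r_le(2) unfolding M'_def by blast
qed

lemma elementary_divisor_ring_fract_ext:
  assumes A: "elementary_divisor_ring (class_ring :: 'a::idom ring)"
  shows "elementary_divisor_ring (fract_ext :: ('a \<times> 'a fract) ring)"
  unfolding elementary_divisor_ring_def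
proof (intro allI impI)
  fix m n and M :: "nat \<Rightarrow> nat \<Rightarrow> 'a \<times> 'a fract"
  have "admits_diagonal_reduction class_ring m n (\<lambda>i k. fst (M i k))"
    using A unfolding elementary_divisor_ring_def is_mat_def by simp
  then obtain P Q where P: "invertible_mat class_ring m P" and Q: "invertible_mat class_ring n Q"
    and smith: "is_smith_form class_ring m n
      (mat_mult class_ring (mat_mult class_ring P (\<lambda>i k. fst (M i k)) m) Q n)"
    unfolding admits_diagonal_reduction_iff by blast
  have "fst (mat_mult fract_ext (mat_mult fract_ext (\<lambda>i j. (P i j, 0)) M m) (\<lambda>i j. (Q i j, 0)) n i k)
      = mat_mult class_ring (mat_mult class_ring P (\<lambda>i k. fst (M i k)) m) Q n i k" for i k
    by (simp add: fract_module.mat_mult_triv_ext mat_mult_class_ring)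
  with smith have "admits_diagonal_reduction fract_ext m n
      (mat_mult fract_ext (mat_mult fract_ext (\<lambda>i j. (P i j, 0)) M m) (\<lambda>i j. (Q i j, 0)) n)"
    by (intro fract_ext_admits_if_fst_smith_form[OF A]) simp
  then show "admits_diagonal_reduction fract_ext m n M"
    by (rule fract_ext.admits_diagonal_reduction_mult_left[OF fract_module.invertible_mat_triv_ext_embed[OF P],
          OF fract_ext.admits_diagonal_reduction_mult_right[OF fract_module.invertible_mat_triv_ext_embed[OF Q]]])
qed

lemma ring_hom_fract_ext_triv_ext:
  fixes scale :: "'a::idom fract \<Rightarrow> 'b::ab_group_add \<Rightarrow> 'b"
  assumes "vector_space scale"
  shows "ring_hom_cring fract_ext (triv_ext (\<lambda>a. scale (fract_of a))) (\<lambda>(a, x). (a, scale x e))"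
proof -
  interpret V: vector_space scale by fact
  interpret M: module "\<lambda>a. scale (fract_of a)" by (rule module_fract_of_scale) fact
  show ?thesis
    by (intro ring_hom_cring.intro ring_hom_cring_axioms.intro ring_hom_memI
        total_cring.axioms(1)[OF fract_module.total_cring_triv_ext]
        total_cring.axioms(1)[OF M.total_cring_triv_ext])
      (auto simp: V.scale_left_distrib V.scale_right_distrib)
qed

theorem theorem3p12:
  fixes scale :: "'a::idom fract \<Rightarrow> 'b::ab_group_add \<Rightarrow> 'b"
  assumes "vector_space scale"
    and "\<exists>e::'b. e \<noteq> 0"
  shows "elementary_divisor_ring (triv_ext (\<lambda>a. scale (Fract a 1)))
     \<longleftrightarrow> (elementary_divisor_ring (class_ring :: 'a ring) \<and> vector_space.dim scale UNIV = 1)"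
proof
  interpret M: module "\<lambda>a. scale (fract_of a)" by (rule module_fract_of_scale) fact
  assume "elementary_divisor_ring (triv_ext (\<lambda>a. scale (Fract a 1)))"
  then show "elementary_divisor_ring (class_ring :: 'a ring) \<and> vector_space.dim scale UNIV = 1"
    using M.elementary_divisor_ring_class_ring_if_triv_ext dim_eq_1_if_triv_ext_edr[OF assms(1)] assms(2)
    by blast
next
  assume A: "elementary_divisor_ring (class_ring :: 'a ring) \<and> vector_space.dim scale UNIV = 1"
  then obtain e where e: "\<forall>x. \<exists>c. x = scale c e"
    using vector_space.dim_UNIV_eq_1_iff[OF assms(1)] by blast
  have "surj (\<lambda>(a::'a, c). (a, scale c e))"
    using e by (metis (mono_tags, lifting) case_prod_conv surj_def surj_pair)
  moreover have "elementary_divisor_ring (fract_ext :: ('a \<times> 'a fract) ring)"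
    using A elementary_divisor_ring_fract_ext by blast
  ultimately show "elementary_divisor_ring (triv_ext (\<lambda>a. scale (Fract a 1)))"
    by (intro elementary_divisor_ring_surj_hom[OF ring_hom_fract_ext_triv_ext[OF assms(1)]]) simp_all
qed

end
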